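(* Let $\vdash\subseteq Sqt$ satisfy (A), (Mon), (Cut), (Com), ($\bot$), ($\wedge$I), ($\wedge$E), ($\to$0), ($\to$1), ($\to$2). Then for every $\varphi\in Form$ and every $\Gamma\in W^c_\vdash$: $\mathfrak M^c_\vdash,\Gamma\models\varphi$ iff $\varphi\in\Gamma$.
   Context: $Form$: $\varphi::=p\mid\bot\mid(\varphi\wedge\varphi)\mid(\varphi\to\varphi)$ over a countable set $P0$ ($\wedge$ left-associative, binds tighter than $\to$). Model $(W,R,V)$ with $W\ne\emptyset$, $R\subseteq W\times W$, $V:P0\to\wp(W)$; satisfaction: $\bot$ never true, $p$ true at $s$ iff $s\in V(p)$, $\wedge$ pointwise, $\varphi\to\psi$ true at $s$ iff every $R$-successor $t$ of $s$ satisfying $\varphi$ satisfies $\psi$. Sequents: $(\Gamma,\varphi)$ with $\Gamma\subseteq Form$; $\Gamma\vdash\varphi$ means $(\Gamma,\varphi)\in\vdash$; $\psi\vdash\varphi$ means $\{\psi\}\vdash\varphi$; $\vdash\varphi$ means $\emptyset\vdash\varphi$. Rules: (A) $\Gamma\cup\{\varphi\}\vdash\varphi$; (Mon) $\Gamma\subseteq\Delta$, $\Gamma\vdash\varphi\Rightarrow\Delta\vdash\varphi$; (Cut) $\Gamma\cup\{\psi\}\vdash\varphi$, $\Delta\vdash\psi\Rightarrow\Gamma\cup\Delta\vdash\varphi$; (Com) $\Gamma\vdash\varphi\Rightarrow\Gamma'\vdash\varphi$ for a finite $\Gamma'\subseteq\Gamma$; ($\bot$) $\bot\vdash\varphi$;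 ($\wedge$I) $\{\varphi,\psi\}\vdash\varphi\wedge\psi$; ($\wedge$E) $\varphi\wedge\psi\vdash\varphi$, $\varphi\wedge\psi\vdash\psi$; ($\to$0) $\vdash\varphi\to\varphi$; ($\to$1) $\Gamma\vdash\varphi\Rightarrow\{\psi\to\chi:\chi\in\Gamma\}\vdash\psi\to\varphi$; ($\to$2) $\{\varphi\to\psi,\psi\to\chi\}\vdash\varphi\to\chi$. $\Gamma$ is $\vdash$-consistent iff $\Gamma\nvdash\varphi$ for some $\varphi$; $\vdash$-deduction closed iff $\Gamma\vdash\psi\Rightarrow\psi\in\Gamma$. For $n\ge2$, $\vdash$ satisfies $(\alpha,\{\beta_1,\dots,\beta_n\})$ iff (i) for all $\Gamma,\varphi$: if $\Gamma\cup\{\beta_i\}\vdash\varphi$ for all $i$ then $\Gamma\cup\{\alpha\}\vdash\varphi$, and (ii) for all $\varphi,\psi_1,\dots,\psi_n$: $\{\psi_i\wedge\beta_i\to\varphi:1\le i\le n\}\vdash\psi_1\wedge\dots\wedge\psi_n\wedge\alpha\to\varphi$. $\Gamma$ is $\vdash$-prime iff whenever $\vdash$ satisfies $(\alpha,\{\beta_1,\dots,\beta_n\})$ ($n\ge2$) and $\alpha\in\Gamma$, some $\beta_i\in\Gamma$. $\Gamma R_\to\Delta$ iff $\varphi\to\psi\in\Gamma$ and $\varphi\in\Delta$ imply $\psi\in\Delta$. The canonical model $\mathfrak M^c_\vdash=(W^c_\vdash,R^c_\vdash,V^c_\vdash)$: $W^c_\vdash$ is the set of $\vdash$-consistent, $\vdash$-deduction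 closed, $\vdash$-prime subsets of $Form$; $R^c_\vdash=R_\to\cap(W^c_\vdash\times W^c_\vdash)$; $V^c_\vdash(p)=\{\Gamma\in W^c_\vdash:p\in\Gamma\}$. *)

theory Defs
  imports Main "HOL-Library.Countable"
begin

datatype 'p form = Var 'p | Bot | Conj "'p form" "'p form" | Imp "'p form" "'p form"

type_synonym 'p cons = "'p form set \<Rightarrow> 'p form \<Rightarrow> bool"

fun sat :: "'s set \<Rightarrow> ('s \<times> 's) set \<Rightarrow> ('p \<Rightarrow> 's set) \<Rightarrow> 's \<Rightarrow> 'p form \<Rightarrow> bool" where
  "sat W R V s (Var p) = (s \<in> V p)"
| "sat W R V s Bot = False"
| "sat W R V s (Conj a b) = (sat W R V s a \<and> sat W R V s b)"
| "sat W R V s (Imp a b) = (\<forall>t. (s, t) \<in> R \<longrightarrow> sat W R V t a \<longrightarrow> sat W R V t b)"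

definition rules :: "'p cons \<Rightarrow> bool" where
  "rules D \<longleftrightarrow>
     (\<forall>\<Gamma> \<phi>. D (\<Gamma> \<union> {\<phi>}) \<phi>)
   \<and> (\<forall>\<Gamma> \<Delta> \<phi>. \<Gamma> \<subseteq> \<Delta> \<longrightarrow> D \<Gamma> \<phi> \<longrightarrow> D \<Delta> \<phi>)
   \<and> (\<forall>\<Gamma> \<Delta> \<phi> \<psi>. D (\<Gamma> \<union> {\<psi>}) \<phi> \<longrightarrow> D \<Delta> \<psi> \<longrightarrow> D (\<Gamma> \<union> \<Delta>) \<phi>)
   \<and> (\<forall>\<Gamma> \<phi>. D \<Gamma> \<phi> \<longrightarrow> (\<exists>\<Gamma>'. finite \<Gamma>' \<and> \<Gamma>' \<subseteq> \<Gamma> \<and> D \<Gamma>' \<phi>))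
   \<and> (\<forall>\<phi>. D {Bot} \<phi>)
   \<and> (\<forall>\<phi> \<psi>. D {\<phi>, \<psi>} (Conj \<phi> \<psi>))
   \<and> (\<forall>\<phi> \<psi>. D {Conj \<phi> \<psi>} \<phi> \<and> D {Conj \<phi> \<psi>} \<psi>)
   \<and> (\<forall>\<phi>. D {} (Imp \<phi> \<phi>))
   \<and> (\<forall>\<Gamma> \<phi> \<psi>. D \<Gamma> \<phi> \<longrightarrow> D {Imp \<psi> \<chi> | \<chi>. \<chi> \<in> \<Gamma>} (Imp \<psi> \<phi>))
   \<and> (\<forall>\<phi> \<psi> \<chi>. D {Imp \<phi> \<psi>, Imp \<psi> \<chi>} (Imp \<phi> \<chi>))"

definition consistent :: "'p cons \<Rightarrow> 'p form set \<Rightarrow> bool" where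
  "consistent D \<Gamma> \<longleftrightarrow> (\<exists>\<phi>. \<not> D \<Gamma> \<phi>)"

definition deduction_closed :: "'p cons \<Rightarrow> 'p form set \<Rightarrow> bool" where
  "deduction_closed D \<Gamma> \<longleftrightarrow> (\<forall>\<psi>. D \<Gamma> \<psi> \<longrightarrow> \<psi> \<in> \<Gamma>)"

definition big_conj :: "'p form list \<Rightarrow> 'p form \<Rightarrow> 'p form" where
  "big_conj ps a = Conj (foldl Conj (hd ps) (tl ps)) a"

(* D satisfies (alpha, {beta_1,...,beta_n}), n = length bs >= 2 *)
definition satisfies_rule :: "'p cons \<Rightarrow> 'p form \<Rightarrow> 'p form list \<Rightarrow> bool" where
  "satisfies_rule D a bs \<longleftrightarrow> length bs \<ge> 2
   \<and> (\<forall>\<Gamma> \<phi>. (\<forall>i < length bs. D (\<Gamma> \<union> {bs ! i}) \<phi>) \<longrightarrow> D (\<Gamma> \<union> {a}) \<phi>)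
   \<and> (\<forall>\<phi> ps. length ps = length bs \<longrightarrow>
        D {Imp (Conj (ps ! i) (bs ! i)) \<phi> | i. i < length bs} (Imp (big_conj ps a) \<phi>))"

definition prime :: "'p cons \<Rightarrow> 'p form set \<Rightarrow> bool" where
  "prime D \<Gamma> \<longleftrightarrow> (\<forall>a bs. satisfies_rule D a bs \<longrightarrow> a \<in> \<Gamma> \<longrightarrow> (\<exists>i < length bs. bs ! i \<in> \<Gamma>))"

definition R_imp :: "('p form set \<times> 'p form set) set" where
  "R_imp = {(\<Gamma>, \<Delta>). \<forall>\<phi> \<psi>. Imp \<phi> \<psi> \<in> \<Gamma> \<longrightarrow> \<phi> \<in> \<Delta> \<longrightarrow> \<psi> \<in> \<Delta>}"

definition Wc :: "'p cons \<Rightarrow> 'p form set set" where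
  "Wc D = {\<Gamma>. consistent D \<Gamma> \<and> deduction_closed D \<Gamma> \<and> prime D \<Gamma>}"

definition Rc :: "'p cons \<Rightarrow> ('p form set \<times> 'p form set) set" where
  "Rc D = R_imp \<inter> (Wc D \<times> Wc D)"

definition Vc :: "'p cons \<Rightarrow> 'p \<Rightarrow> 'p form set set" where
  "Vc D p = {\<Gamma> \<in> Wc D. Var p \<in> \<Gamma>}"

end

theory Submission
  imports Defs
begin

text \<open>The truth lemma is proved by induction on the formula; only implication needs work.
  If \<open>\<phi> \<rightarrow> \<psi> \<notin> \<Gamma>\<close>, Zorn's lemma yields a maximal set \<open>M \<ni> \<phi>\<close> such that no conjunction \<open>c\<close> of
  members of \<open>M\<close> has \<open>c \<rightarrow> \<psi> \<in> \<Gamma>\<close>. By (Com) and (\<open>\<rightarrow>\<close>1) every consequence of \<open>M\<close> is implied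
  in \<open>\<Gamma>\<close> by such a conjunction, so maximality makes \<open>M\<close> deduction closed and
  \<open>R\<^sub>\<rightarrow>\<close>-accessible from \<open>\<Gamma>\<close>, and clause (ii) of a satisfied rule makes it prime. Thus \<open>M\<close> is
  a point of the canonical model that sees \<open>\<phi>\<close> but not \<open>\<psi>\<close>.\<close>

inductive_set conj_closure :: "'p form set \<Rightarrow> 'p form set" for S where
  base: "x \<in> S \<Longrightarrow> x \<in> conj_closure S"
| Conj: "a \<in> conj_closure S \<Longrightarrow> b \<in> conj_closure S \<Longrightarrow> Conj a b \<in> conj_closure S"

lemma conj_closure_mono: "c \<in> conj_closure S \<Longrightarrow> S \<subseteq> S' \<Longrightarrow> c \<in> conj_closure S'"
  by (induction rule: conj_closure.induct) (auto intro: conj_closure.intros)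

lemma foldl_Conj_in_conj_closure:
  "x \<in> conj_closure S \<Longrightarrow> set ys \<subseteq> conj_closure S \<Longrightarrow> foldl Conj x ys \<in> conj_closure S"
  by (induction ys arbitrary: x) (auto intro: conj_closure.intros)

lemma big_conj_in_conj_closure:
  assumes "ps \<noteq> []" "set ps \<subseteq> conj_closure S" "a \<in> S"
  shows "big_conj ps a \<in> conj_closure S"
proof -
  have "foldl Conj (hd ps) (tl ps) \<in> conj_closure S"
    using assms(1,2) by (cases ps) (auto intro: foldl_Conj_in_conj_closure)
  then show ?thesis
    unfolding big_conj_def using assms(3) by (blast intro: conj_closure.intros)
qed

lemma conj_closure_Union_chain:
  assumes "chain\<^sub>\<subseteq> C" "c \<in> conj_closure (\<Union>C)"
  shows "\<exists>X\<in>C. c \<in> conj_closure X"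
  using assms(2)
proof (induction rule: conj_closure.induct)
  case (base x)
  then show ?case by (blast intro: conj_closure.base)
next
  case (Conj a b)
  then obtain X Y where X: "X \<in> C" "a \<in> conj_closure X" and Y: "Y \<in> C" "b \<in> conj_closure Y"
    by blast
  from assms(1) X(1) Y(1) have "X \<subseteq> Y \<or> Y \<subseteq> X"
    unfolding chain_subset_def by blast
  then show ?case
  proof
    assume "X \<subseteq> Y"
    then show ?case
      using conj_closure.Conj[OF conj_closure_mono[OF X(2)] Y(2)] Y(1) by blast
  next
    assume "Y \<subseteq> X"
    then show ?case
      using conj_closure.Conj[OF X(2) conj_closure_mono[OF Y(2)]] X(1) by blast
  qed
qed

definition avoids :: "'p form set \<Rightarrow> 'p form \<Rightarrow> 'p form set \<Rightarrow> bool" where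
  "avoids G \<psi> T \<longleftrightarrow> (\<forall>c\<in>conj_closure T. Imp c \<psi> \<notin> G)"

lemma avoids_Union_chain: "chain\<^sub>\<subseteq> C \<Longrightarrow> \<forall>T\<in>C. avoids G \<psi> T \<Longrightarrow> avoids G \<psi> (\<Union>C)"
  unfolding avoids_def using conj_closure_Union_chain by blast

lemma maximal_avoiding_exists:
  assumes "avoids G \<psi> {\<phi>}"
  obtains M where "\<phi> \<in> M" "avoids G \<psi> M" "\<And>\<beta>. \<beta> \<notin> M \<Longrightarrow> \<not> avoids G \<psi> (insert \<beta> M)"
proof -
  let ?A = "{T. \<phi> \<in> T \<and> avoids G \<psi> T}"
  have "\<exists>M\<in>?A. \<forall>X\<in>?A. M \<subseteq> X \<longrightarrow> X = M"
  proof (rule subset_Zorn_nonempty)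
    show "?A \<noteq> {}"
      using assms by blast
  next
    fix C assume "C \<noteq> {}" "subset.chain ?A C"
    then have "C \<subseteq> ?A" "chain\<^sub>\<subseteq> C"
      unfolding subset_chain_def chain_subset_def by blast+
    with \<open>C \<noteq> {}\<close> avoids_Union_chain[of C] show "\<Union>C \<in> ?A"
      by blast
  qed
  then obtain M where M: "\<phi> \<in> M" "avoids G \<psi> M"
    and maximal: "\<And>X. \<phi> \<in> X \<Longrightarrow> avoids G \<psi> X \<Longrightarrow> M \<subseteq> X \<Longrightarrow> X = M"
    by blast
  show thesis
  proof (rule that[OF M])
    fix \<beta> assume "\<beta> \<notin> M"
    then show "\<not> avoids G \<psi> (insert \<beta> M)"
      using maximal[of "insert \<beta> M"] M(1) by blast
  qed
qed

locale consequence =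
  fixes D :: "'p cons"
  assumes entails_member: "D (\<Gamma> \<union> {\<phi>}) \<phi>"
    and entails_mono: "\<Gamma> \<subseteq> \<Delta> \<Longrightarrow> D \<Gamma> \<phi> \<Longrightarrow> D \<Delta> \<phi>"
    and entails_cut: "D (\<Gamma> \<union> {\<psi>}) \<phi> \<Longrightarrow> D \<Delta> \<psi> \<Longrightarrow> D (\<Gamma> \<union> \<Delta>) \<phi>"
    and entails_compact: "D \<Gamma> \<phi> \<Longrightarrow> \<exists>\<Gamma>'. finite \<Gamma>' \<and> \<Gamma>' \<subseteq> \<Gamma> \<and> D \<Gamma>' \<phi>"
    and Bot_entails: "D {Bot} \<phi>"
    and ConjI: "D {\<phi>, \<psi>} (Conj \<phi> \<psi>)"
    and ConjE1: "D {Conj \<phi> \<psi>} \<phi>"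
    and ConjE2: "D {Conj \<phi> \<psi>} \<psi>"
    and Imp_refl: "D {} (Imp \<phi> \<phi>)"
    and Imp_prefix: "D \<Gamma> \<phi> \<Longrightarrow> D {Imp \<psi> \<chi> | \<chi>. \<chi> \<in> \<Gamma>} (Imp \<psi> \<phi>)"
    and Imp_trans: "D {Imp \<phi> \<psi>, Imp \<psi> \<chi>} (Imp \<phi> \<chi>)"

lemma consequence_if_rules: "rules D \<Longrightarrow> consequence D"
  unfolding rules_def consequence_def by simp

context consequence
begin

lemma entails_self: "D {\<phi>} \<phi>"
  using entails_member[of "{}"] by simp

lemma entails_trans: "D {\<phi>} \<psi> \<Longrightarrow> D {\<psi>} \<chi> \<Longrightarrow> D {\<phi>} \<chi>"
  using entails_cut[of "{}" \<psi> \<chi> "{\<phi>}"] by simp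

lemma entails_Conj:
  assumes "D {\<chi>} \<phi>" "D {\<chi>} \<psi>"
  shows "D {\<chi>} (Conj \<phi> \<psi>)"
proof -
  have "D ({\<psi>} \<union> {\<phi>}) (Conj \<phi> \<psi>)"
    using ConjI[of \<phi> \<psi>] by (simp add: insert_commute)
  from entails_cut[OF this assms(1)] have "D ({\<chi>} \<union> {\<psi>}) (Conj \<phi> \<psi>)"
    by (simp add: insert_commute)
  from entails_cut[OF this assms(2)] show ?thesis
    by simp
qed

lemma entails_cut_finite:
  "finite F \<Longrightarrow> D (\<Gamma> \<union> F) \<chi> \<Longrightarrow> \<forall>\<theta>\<in>F. D {c} \<theta> \<Longrightarrow> D (\<Gamma> \<union> {c}) \<chi>"
proof (induction F arbitrary: \<Gamma> rule: finite_induct)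
  case empty
  then show ?case using entails_mono[of \<Gamma> "\<Gamma> \<union> {c}" \<chi>] by (simp add: subset_insertI)
next
  case (insert \<theta> F)
  have "D ((\<Gamma> \<union> F) \<union> {\<theta>}) \<chi>" "D {c} \<theta>"
    using insert.prems by (simp_all add: Un_insert_right)
  from entails_cut[OF this] have "D ((\<Gamma> \<union> {c}) \<union> F) \<chi>"
    by (simp add: Un_ac)
  with insert.IH insert.prems(2) have "D ((\<Gamma> \<union> {c}) \<union> {c}) \<chi>"
    by blast
  then show ?case
    by simp
qed

lemma conj_closure_entails_finite:
  "finite F \<Longrightarrow> F \<subseteq> T \<Longrightarrow> T \<noteq> {} \<Longrightarrow> \<exists>c\<in>conj_closure T. \<forall>\<theta>\<in>F. D {c} \<theta>"
proof (induction F rule: finite_induct)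
  case empty
  then show ?case by (blast intro: conj_closure.base)
next
  case (insert \<theta> F)
  then obtain c where "c \<in> conj_closure T" "\<forall>\<theta>'\<in>F. D {c} \<theta>'"
    by blast
  moreover have "\<theta> \<in> conj_closure T"
    using insert.prems by (blast intro: conj_closure.base)
  ultimately show ?case
    using ConjE2 entails_trans[OF ConjE1] by (blast intro: conj_closure.Conj)
qed

lemma entails_conj_closure:
  assumes "D T \<chi>" "T \<noteq> {}"
  shows "\<exists>c\<in>conj_closure T. D {c} \<chi>"
proof -
  obtain F where F: "finite F" "F \<subseteq> T" "D F \<chi>"
    using entails_compact[OF assms(1)] by blast
  then obtain c where "c \<in> conj_closure T" "\<forall>\<theta>\<in>F. D {c} \<theta>"
    using conj_closure_entails_finite assms(2) by blast
  with F show ?thesis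
    using entails_cut_finite[of F "{}" \<chi> c] by auto
qed

lemma conj_closure_insert_entails:
  assumes "T \<noteq> {}" "c \<in> conj_closure (insert \<beta> T)"
  shows "\<exists>p\<in>conj_closure T. D {Conj p \<beta>} c"
  using assms(2)
proof (induction rule: conj_closure.induct)
  case (base x)
  then show ?case
    using assms(1) ConjE1 ConjE2 by (blast intro: conj_closure.base)
next
  case (Conj a b)
  then obtain p q where "p \<in> conj_closure T" "D {Conj p \<beta>} a"
    and "q \<in> conj_closure T" "D {Conj q \<beta>} b"
    by blast
  moreover have "D {Conj (Conj p q) \<beta>} (Conj p \<beta>)" "D {Conj (Conj p q) \<beta>} (Conj q \<beta>)"
    by (rule entails_Conj[OF entails_trans[OF ConjE1 ConjE1] ConjE2],
        rule entails_Conj[OF entails_trans[OF ConjE1 ConjE2] ConjE2])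
  ultimately have "D {Conj (Conj p q) \<beta>} (Conj a b)"
    using entails_Conj entails_trans by metis
  then show ?case
    using \<open>p \<in> conj_closure T\<close> \<open>q \<in> conj_closure T\<close> by (blast intro: conj_closure.Conj)
qed

lemma Bot_not_in_consistent: "consistent D \<Gamma> \<Longrightarrow> Bot \<notin> \<Gamma>"
  unfolding consistent_def using entails_mono[of "{Bot}"] Bot_entails by blast

lemma deduction_closed_entails:
  "deduction_closed D \<Gamma> \<Longrightarrow> D \<Delta> \<phi> \<Longrightarrow> \<Delta> \<subseteq> \<Gamma> \<Longrightarrow> \<phi> \<in> \<Gamma>"
  unfolding deduction_closed_def using entails_mono by blast

context
  fixes G
  assumes G_closed: "deduction_closed D G"
begin

lemma closed_Conj_iff: "Conj \<phi> \<psi> \<in> G \<longleftrightarrow> \<phi> \<in> G \<and> \<psi> \<in> G"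
  using deduction_closed_entails[OF G_closed] ConjI ConjE1 ConjE2 by blast

lemma closed_Imp_if_entails: "D {\<phi>} \<psi> \<Longrightarrow> Imp \<phi> \<psi> \<in> G"
  using deduction_closed_entails[OF G_closed Imp_prefix, of "{\<phi>}" \<psi> \<phi>]
    deduction_closed_entails[OF G_closed Imp_refl]
  by auto

lemma closed_Imp_trans: "Imp \<phi> \<psi> \<in> G \<Longrightarrow> Imp \<psi> \<chi> \<in> G \<Longrightarrow> Imp \<phi> \<chi> \<in> G"
  using deduction_closed_entails[OF G_closed Imp_trans] by blast

lemma closed_Imp_Conj: "Imp \<chi> \<phi> \<in> G \<Longrightarrow> Imp \<chi> \<psi> \<in> G \<Longrightarrow> Imp \<chi> (Conj \<phi> \<psi>) \<in> G"
  using deduction_closed_entails[OF G_closed Imp_prefix[OF ConjI], of \<chi> \<phi> \<psi>] by blast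

lemma closed_Imp_conj_closure_insert:
  assumes "c\<^sub>0 \<in> conj_closure T" "Imp c\<^sub>0 \<beta> \<in> G" "c \<in> conj_closure (insert \<beta> T)"
  shows "\<exists>c'\<in>conj_closure T. Imp c' c \<in> G"
  using assms(3)
proof (induction rule: conj_closure.induct)
  case (base x)
  then consider "x = \<beta>" | "x \<in> T"
    by blast
  then show ?case
  proof cases
    case 1
    then show ?thesis using assms(1,2) by blast
  next
    case 2
    then show ?thesis
      using closed_Imp_if_entails[OF entails_self] by (blast intro: conj_closure.base)
  qed
next
  case (Conj a b)
  then obtain p q where p: "p \<in> conj_closure T" "Imp p a \<in> G"
    and q: "q \<in> conj_closure T" "Imp q b \<in> G"
    by blast
  have "Imp (Conj p q) a \<in> G" "Imp (Conj p q) b \<in> G"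
    by (rule closed_Imp_trans[OF closed_Imp_if_entails[OF ConjE1] p(2)],
        rule closed_Imp_trans[OF closed_Imp_if_entails[OF ConjE2] q(2)])
  then have "Imp (Conj p q) (Conj a b) \<in> G"
    by (rule closed_Imp_Conj)
  then show ?case
    using conj_closure.Conj[OF p(1) q(1)] by blast
qed

lemma avoids_singleton:
  assumes "Imp \<phi> \<psi> \<notin> G"
  shows "avoids G \<psi> {\<phi>}"
proof -
  have "D {\<phi>} c" if "c \<in> conj_closure {\<phi>}" for c
    using that by induction (auto intro: entails_Conj entails_self)
  with assms show ?thesis
    unfolding avoids_def using closed_Imp_if_entails closed_Imp_trans by blast
qed

end

context
  fixes G \<psi> M
  assumes G_closed: "deduction_closed D G"
    and M_avoids: "avoids G \<psi> M"
    and M_nonempty: "M \<noteq> {}"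
    and M_maximal: "\<And>\<beta>. \<beta> \<notin> M \<Longrightarrow> \<not> avoids G \<psi> (insert \<beta> M)"
begin

lemma maximal_avoiding_mem_if_Imp:
  assumes "c\<^sub>0 \<in> conj_closure M" "Imp c\<^sub>0 \<beta> \<in> G"
  shows "\<beta> \<in> M"
proof (rule ccontr)
  assume "\<beta> \<notin> M"
  then obtain c where "c \<in> conj_closure (insert \<beta> M)" "Imp c \<psi> \<in> G"
    using M_maximal unfolding avoids_def by blast
  moreover obtain c' where "c' \<in> conj_closure M" "Imp c' c \<in> G"
    using closed_Imp_conj_closure_insert[OF G_closed assms calculation(1)] by blast
  ultimately show False
    using M_avoids closed_Imp_trans[OF G_closed] unfolding avoids_def by blast
qed

lemma maximal_avoiding_R_imp: "(G, M) \<in> R_imp"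
  unfolding R_imp_def using maximal_avoiding_mem_if_Imp by (blast intro: conj_closure.base)

lemma maximal_avoiding_deduction_closed: "deduction_closed D M"
  unfolding deduction_closed_def
proof (intro allI impI)
  fix \<chi> assume "D M \<chi>"
  then obtain c where "c \<in> conj_closure M" "D {c} \<chi>"
    using entails_conj_closure M_nonempty by blast
  then show "\<chi> \<in> M"
    using maximal_avoiding_mem_if_Imp closed_Imp_if_entails[OF G_closed] by blast
qed

lemma maximal_avoiding_not_mem: "\<psi> \<notin> M"
  using M_avoids deduction_closed_entails[OF G_closed Imp_refl]
  unfolding avoids_def by (blast intro: conj_closure.base)

lemma maximal_avoiding_consistent: "consistent D M"
  using maximal_avoiding_deduction_closed maximal_avoiding_not_mem
  unfolding consistent_def deduction_closed_def by blast

lemma maximal_avoiding_witness: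
  assumes "\<beta> \<notin> M"
  shows "\<exists>p\<in>conj_closure M. Imp (Conj p \<beta>) \<psi> \<in> G"
proof -
  obtain c where "c \<in> conj_closure (insert \<beta> M)" "Imp c \<psi> \<in> G"
    using M_maximal[OF assms] unfolding avoids_def by blast
  moreover from calculation(1) obtain p where "p \<in> conj_closure M" "D {Conj p \<beta>} c"
    using conj_closure_insert_entails[OF M_nonempty] by blast
  ultimately show ?thesis
    using closed_Imp_if_entails[OF G_closed] closed_Imp_trans[OF G_closed] by blast
qed

lemma maximal_avoiding_prime: "prime D M"
  unfolding prime_def
proof (intro allI impI)
  fix \<alpha> bs assume rule: "satisfies_rule D \<alpha> bs" and "\<alpha> \<in> M"
  show "\<exists>i<length bs. bs ! i \<in> M"
  proof (rule ccontr)
    assume none: "\<not> (\<exists>i<length bs. bs ! i \<in> M)"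
    have "\<forall>i<length bs. \<exists>p. p \<in> conj_closure M \<and> Imp (Conj p (bs ! i)) \<psi> \<in> G"
    proof (intro allI impI)
      fix i assume "i < length bs"
      with none have "bs ! i \<notin> M" by blast
      then show "\<exists>p. p \<in> conj_closure M \<and> Imp (Conj p (bs ! i)) \<psi> \<in> G"
        using maximal_avoiding_witness by blast
    qed
    then obtain f where f: "\<And>i. i < length bs \<Longrightarrow> f i \<in> conj_closure M"
      "\<And>i. i < length bs \<Longrightarrow> Imp (Conj (f i) (bs ! i)) \<psi> \<in> G"
      by metis
    define ps where "ps = map f [0..<length bs]"
    have "length ps = length bs" "ps \<noteq> []"
      using rule by (auto simp: ps_def satisfies_rule_def)
    then have "D {Imp (Conj (ps ! i) (bs ! i)) \<psi> | i. i < length bs} (Imp (big_conj ps \<alpha>) \<psi>)"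
      using rule unfolding satisfies_rule_def by blast
    moreover have "{Imp (Conj (ps ! i) (bs ! i)) \<psi> | i. i < length bs} \<subseteq> G"
      using f(2) by (auto simp: ps_def)
    ultimately have "Imp (big_conj ps \<alpha>) \<psi> \<in> G"
      by (rule deduction_closed_entails[OF G_closed])
    moreover have "set ps \<subseteq> conj_closure M"
      using f(1) by (auto simp: ps_def)
    then have "big_conj ps \<alpha> \<in> conj_closure M"
      using big_conj_in_conj_closure \<open>ps \<noteq> []\<close> \<open>\<alpha> \<in> M\<close> by blast
    ultimately show False
      using M_avoids unfolding avoids_def by blast
  qed
qed

lemma maximal_avoiding_in_Wc: "M \<in> Wc D"
  unfolding Wc_def using maximal_avoiding_consistent maximal_avoiding_deduction_closed
    maximal_avoiding_prime by blast

end

lemma R_imp_counterexample: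
  assumes "deduction_closed D G" "Imp \<phi> \<psi> \<notin> G"
  obtains T where "T \<in> Wc D" "(G, T) \<in> R_imp" "\<phi> \<in> T" "\<psi> \<notin> T"
proof -
  obtain M where "\<phi> \<in> M" "avoids G \<psi> M" "\<And>\<beta>. \<beta> \<notin> M \<Longrightarrow> \<not> avoids G \<psi> (insert \<beta> M)"
    using maximal_avoiding_exists avoids_singleton[OF assms] by blast
  moreover from this have "M \<noteq> {}" by blast
  ultimately show thesis
    using that maximal_avoiding_in_Wc maximal_avoiding_R_imp maximal_avoiding_not_mem assms(1)
    by blast
qed

lemma Wc_Imp_iff:
  assumes "\<Gamma> \<in> Wc D"
  shows "Imp \<phi> \<psi> \<in> \<Gamma> \<longleftrightarrow> (\<forall>\<Delta>. (\<Gamma>, \<Delta>) \<in> Rc D \<longrightarrow> \<phi> \<in> \<Delta> \<longrightarrow> \<psi> \<in> \<Delta>)"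
proof
  assume "Imp \<phi> \<psi> \<in> \<Gamma>"
  then show "\<forall>\<Delta>. (\<Gamma>, \<Delta>) \<in> Rc D \<longrightarrow> \<phi> \<in> \<Delta> \<longrightarrow> \<psi> \<in> \<Delta>"
    unfolding Rc_def R_imp_def by blast
next
  assume accessible: "\<forall>\<Delta>. (\<Gamma>, \<Delta>) \<in> Rc D \<longrightarrow> \<phi> \<in> \<Delta> \<longrightarrow> \<psi> \<in> \<Delta>"
  show "Imp \<phi> \<psi> \<in> \<Gamma>"
  proof (rule ccontr)
    assume "Imp \<phi> \<psi> \<notin> \<Gamma>"
    moreover have "deduction_closed D \<Gamma>"
      using assms by (simp add: Wc_def)
    ultimately obtain T where "T \<in> Wc D" "(\<Gamma>, T) \<in> R_imp" "\<phi> \<in> T" "\<psi> \<notin> T"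
      using R_imp_counterexample by blast
    with assms accessible show False
      unfolding Rc_def by blast
  qed
qed

lemma truth_lemma: "\<Gamma> \<in> Wc D \<Longrightarrow> sat (Wc D) (Rc D) (Vc D) \<Gamma> \<phi> \<longleftrightarrow> \<phi> \<in> \<Gamma>"
proof (induction \<phi> arbitrary: \<Gamma>)
  case (Var p)
  then show ?case by (simp add: Vc_def)
next
  case Bot
  then show ?case using Bot_not_in_consistent by (simp add: Wc_def)
next
  case (Conj \<phi> \<psi>)
  then have "deduction_closed D \<Gamma>" by (simp add: Wc_def)
  with Conj show ?case by (simp add: closed_Conj_iff)
next
  case (Imp \<phi> \<psi>)
  have "\<Delta> \<in> Wc D" if "(\<Gamma>, \<Delta>) \<in> Rc D" for \<Delta>
    using that by (simp add: Rc_def)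
  with Imp show ?case
    using Wc_Imp_iff[OF Imp.prems] by auto
qed

end

theorem mainTheorem12:
  fixes D :: "('p::countable) cons"
  assumes "rules D"
  shows "\<forall>\<phi> \<Gamma>. \<Gamma> \<in> Wc D \<longrightarrow> (sat (Wc D) (Rc D) (Vc D) \<Gamma> \<phi> \<longleftrightarrow> \<phi> \<in> \<Gamma>)"
  using consequence.truth_lemma[OF consequence_if_rules[OF assms]] by blast

end
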